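(* Let $H_1,H_2$ be complex Hilbert spaces. The set $\{A\in\mathcal B(H_1,H_2): A \text{ is minimum attaining and bounded below}\}$ is dense, in the operator norm, in $\{A\in\mathcal B(H_1,H_2): A\text{ is bounded below}\}$.
   Context: Hilbert spaces are complex and infinite dimensional. For $A\in\mathcal B(H_1,H_2)$, $m(A)=\inf\{\|Ax\|:\|x\|=1\}$; $A$ is minimum attaining if there exists $x_0$ with $\|x_0\|=1$ and $\|Ax_0\|=m(A)$; $A$ is bounded below if there is $c>0$ with $\|Ax\|\geq c\|x\|$ for all $x$. *)

theory Defs
  imports "HOL-Analysis.Analysis"
begin

text \<open>The distribution has no class of complex inner product
spaces, so we model a complex Hilbert space as a real Hilbert space (real inner
product = real part of the complex inner product, complete) equipped with a complex
scalar multiplication extending the real one and compatible with the norm.\<close>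

class complex_hilbert = real_inner + complete_space +
  fixes cscale :: "complex \<Rightarrow> 'a \<Rightarrow> 'a"
  assumes cscale_add_right: "cscale c (x + y) = cscale c x + cscale c y"
    and cscale_add_left: "cscale (c + d) x = cscale c x + cscale d x"
    and cscale_cscale: "cscale c (cscale d x) = cscale (c * d) x"
    and cscale_of_real: "cscale (complex_of_real r) x = scaleR r x"
    and norm_cscale: "norm (cscale c x) = cmod c * norm x"

instantiation complex :: complex_hilbert
begin
definition cscale_complex :: "complex \<Rightarrow> complex \<Rightarrow> complex" where
  "cscale_complex c x = c * x"
instance
  by standard (auto simp: cscale_complex_def algebra_simps norm_mult scaleR_conv_of_real)
end

definition cspan :: "'a::complex_hilbert set \<Rightarrow> 'a set" where
  "cspan S = {\<Sum>x\<in>T. cscale (c x) x | T c. finite T \<and> T \<subseteq> S}"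

definition infinite_dimensional :: "'a::complex_hilbert itself \<Rightarrow> bool" where
  "infinite_dimensional _ \<longleftrightarrow> \<not> (\<exists>S::'a set. finite S \<and> cspan S = UNIV)"

text \<open>\<B>(H1,H2): bounded operators that are complex linear. Elements of the
blinfun type are bounded real-linear maps; the operator norm is the blinfun norm.\<close>
definition clinear_op :: "('a::complex_hilbert \<Rightarrow>\<^sub>L 'b::complex_hilbert) \<Rightarrow> bool" where
  "clinear_op A \<longleftrightarrow> (\<forall>c x. blinfun_apply A (cscale c x) = cscale c (blinfun_apply A x))"

definition min_modulus :: "('a::real_normed_vector \<Rightarrow>\<^sub>L 'b::real_normed_vector) \<Rightarrow> real" where
  "min_modulus A = Inf {norm (blinfun_apply A x) | x. norm x = 1}"

definition minimum_attaining :: "('a::real_normed_vector \<Rightarrow>\<^sub>L 'b::real_normed_vector) \<Rightarrow> bool" where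
  "minimum_attaining A \<longleftrightarrow> (\<exists>x0. norm x0 = 1 \<and> norm (blinfun_apply A x0) = min_modulus A)"

definition bounded_below :: "('a::real_normed_vector \<Rightarrow>\<^sub>L 'b::real_normed_vector) \<Rightarrow> bool" where
  "bounded_below A \<longleftrightarrow> (\<exists>c>0. \<forall>x. norm (blinfun_apply A x) \<ge> c * norm x)"

end

theory Submission
  imports Defs
begin

text \<open>Let \<open>m > 0\<close> be the minimum modulus of \<open>A\<close> and \<open>x\<close> a unit vector with
\<open>\<parallel>A x\<parallel> < m + \<delta>\<close>. Let \<open>e\<close> be the component of \<open>A x\<close> orthogonal to the image under \<open>A\<close>
of the orthogonal complement of the complex line \<open>\<complex> x\<close> (projection onto the closure of that
subspace). Since \<open>\<parallel>A (x - z)\<parallel> \<ge> m \<parallel>x - z\<parallel> \<ge> m\<close> for such \<open>z\<close>, we get \<open>\<parallel>e\<parallel> \<ge> m\<close>, while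
\<open>\<parallel>A x - e\<parallel>\<^sup>2 = \<parallel>A x\<parallel>\<^sup>2 - \<parallel>e\<parallel>\<^sup>2 \<le> (m + \<delta>)\<^sup>2 - m\<^sup>2\<close> is small. Changing \<open>A\<close> only on \<open>\<complex> x\<close>, by a
complex rank-one operator, so that \<open>x\<close> goes to the multiple of \<open>e\<close> of length \<open>m\<close>, gives an
operator that is still bounded below by \<open>m\<close> (Pythagoras), attains \<open>m\<close> at \<open>x\<close>, and is close to \<open>A\<close>.\<close>

section \<open>Complex scalar multiplication\<close>

lemma cscale_scaleR: "cscale c (r *\<^sub>R x) = r *\<^sub>R cscale c (x::'a::complex_hilbert)"
proof -
  have "cscale c (r *\<^sub>R x) = cscale (complex_of_real r) (cscale c x)"
    by (simp add: cscale_cscale mult.commute flip: cscale_of_real)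
  then show ?thesis by (simp add: cscale_of_real)
qed

lemma cscale_ii_ii: "cscale \<i> (cscale \<i> x) = - (x::'a::complex_hilbert)"
  using cscale_of_real[of "-1" x] by (simp add: cscale_cscale)

lemma cscale_eq_Re_Im: "cscale c x = Re c *\<^sub>R x + Im c *\<^sub>R cscale \<i> (x::'a::complex_hilbert)"
proof -
  have "cscale c x = cscale (complex_of_real (Re c) + \<i> * complex_of_real (Im c)) x"
    using complex_eq[of c] by simp
  then show ?thesis
    by (simp add: cscale_add_left cscale_cscale[symmetric] cscale_of_real cscale_scaleR)
qed

lemma norm_cscale_ii [simp]: "norm (cscale \<i> x) = norm (x::'a::complex_hilbert)"
  by (simp add: norm_cscale)

lemma inner_cscale_ii_ii [simp]: "inner (cscale \<i> x) (cscale \<i> y) = inner x (y::'a::complex_hilbert)"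
  by (simp add: dot_norm[of "cscale \<i> x"] dot_norm[of x] cscale_add_right[symmetric])

lemma inner_cscale_ii_left: "inner (cscale \<i> x) y = - inner x (cscale \<i> (y::'a::complex_hilbert))"
  using inner_cscale_ii_ii[of "cscale \<i> x" y] by (simp add: cscale_ii_ii)

lemma inner_cscale_ii_self [simp]: "inner x (cscale \<i> (x::'a::complex_hilbert)) = 0"
  using inner_cscale_ii_left[of x x] by (simp add: inner_commute)

lemma clinear_opI:
  assumes "\<And>x. blinfun_apply A (cscale \<i> x) = cscale \<i> (blinfun_apply A x)"
  shows "clinear_op (A :: 'a::complex_hilbert \<Rightarrow>\<^sub>L 'b::complex_hilbert)"
  unfolding clinear_op_def
  by (subst (1 2) cscale_eq_Re_Im) (simp add: blinfun.add_right blinfun.scaleR_right assms)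

lemma clinear_opD: "clinear_op A \<Longrightarrow> blinfun_apply A (cscale \<i> x) = cscale \<i> (blinfun_apply A x)"
  unfolding clinear_op_def by blast

lemma clinear_op_add: "clinear_op A \<Longrightarrow> clinear_op B \<Longrightarrow> clinear_op (A + B)"
  by (simp add: clinear_op_def blinfun.add_left cscale_add_right)

section \<open>The projection theorem\<close>

lemma subspace_closure:
  fixes S :: "'a::real_normed_vector set"
  assumes "subspace S"
  shows "subspace (closure S)"
  unfolding subspace_def
proof (intro conjI ballI allI)
  show "0 \<in> closure S"
    using assms subspace_0 closure_subset by blast
next
  fix x y assume "x \<in> closure S" "y \<in> closure S"
  then obtain a b where ab: "\<And>n. a n \<in> S" "a \<longlonglongrightarrow> x" "\<And>n. b n \<in> S" "b \<longlonglongrightarrow> y"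
    unfolding closure_sequential by blast
  have "\<forall>n. a n + b n \<in> S" using ab subspace_add[OF assms] by blast
  moreover have "(\<lambda>n. a n + b n) \<longlonglongrightarrow> x + y" using ab by (intro tendsto_add)
  ultimately show "x + y \<in> closure S"
    unfolding closure_sequential by (intro exI[of _ "\<lambda>n. a n + b n"] conjI)
next
  fix c x assume "x \<in> closure S"
  then obtain a where a: "\<And>n. a n \<in> S" "a \<longlonglongrightarrow> x"
    unfolding closure_sequential by blast
  have "\<forall>n. c *\<^sub>R a n \<in> S" using a subspace_scale[OF assms] by blast
  moreover have "(\<lambda>n. c *\<^sub>R a n) \<longlonglongrightarrow> c *\<^sub>R x" using a by (intro tendsto_intros)
  ultimately show "c *\<^sub>R x \<in> closure S"
    unfolding closure_sequential by (intro exI[of _ "\<lambda>n. c *\<^sub>R a n"] conjI)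
qed

lemma infdist_le_closure:
  assumes "y \<in> closure S"
  shows "infdist x S \<le> dist x y"
proof -
  have "closed {y. infdist x S \<le> dist x y}"
    by (intro closed_Collect_le continuous_intros)
  then have "closure S \<subseteq> {y. infdist x S \<le> dist x y}"
    by (rule closure_minimal[rotated]) (auto intro: infdist_le)
  then show ?thesis using assms by blast
qed

lemma parallelogram_law:
  fixes x y :: "'a::real_inner"
  shows "norm (x - y)^2 + norm (x + y)^2 = 2 * norm x^2 + 2 * norm y^2"
  by (simp add: power2_norm_eq_inner inner_add inner_diff inner_commute algebra_simps)

lemma norm_diff_square_le_infdist:
  fixes S :: "'a::real_inner set"
  assumes "convex S" "a \<in> S" "b \<in> S"
  shows "norm (a - b)^2 \<le> 2 * norm (u - a)^2 + 2 * norm (u - b)^2 - 4 * (infdist u S)^2"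
proof -
  have "(1/2) *\<^sub>R a + (1/2) *\<^sub>R b \<in> S"
    using convexD[OF assms, of "1/2" "1/2"] by simp
  then have "infdist u S \<le> norm (u - ((1/2) *\<^sub>R a + (1/2) *\<^sub>R b))"
    using infdist_le by (metis dist_norm)
  then have "4 * (infdist u S)^2 \<le> 4 * norm (u - ((1/2) *\<^sub>R a + (1/2) *\<^sub>R b))^2"
    by (intro mult_left_mono power_mono infdist_nonneg) auto
  also have "\<dots> = norm ((u - a) + (u - b))^2"
  proof -
    have "(u - a) + (u - b) = 2 *\<^sub>R (u - ((1/2) *\<^sub>R a + (1/2) *\<^sub>R b))"
      by (simp add: algebra_simps scaleR_2)
    then show ?thesis by (simp add: power_mult_distrib)
  qed
  finally show ?thesis
    using parallelogram_law[of "u - a" "u - b"] by (simp add: norm_minus_commute)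
qed

lemma inner_eq_zero_if_norm_le_add:
  fixes x y :: "'a::real_inner"
  assumes "\<And>t. norm x \<le> norm (x + t *\<^sub>R y)"
  shows "inner x y = 0"
proof -
  define c where "c = inner x y"
  define N where "N = (norm y)^2"
  have N: "0 \<le> N" by (simp add: N_def)
  have "0 \<le> 2 * t * c + t^2 * N" for t
  proof -
    have "(norm x)^2 \<le> (norm (x + t *\<^sub>R y))^2"
      using assms by (simp add: power_mono)
    also have "\<dots> = (norm x)^2 + 2 * t * c + t^2 * N"
      unfolding c_def N_def power2_norm_eq_inner
      by (simp add: inner_add_left inner_add_right inner_commute power2_eq_square algebra_simps)
    finally show ?thesis by simp
  qed
  from this[of "- c / (N + 1)"]
  have "0 \<le> (N + 1)^2 * (2 * (- c / (N + 1)) * c + (- c / (N + 1))^2 * N)"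
    using N by simp
  also have "\<dots> = (N + 1)^2 * (2 * (- c / (N + 1)) * c) + (N + 1)^2 * ((- c / (N + 1))^2 * N)"
    by (rule distrib_left)
  also have "(N + 1)^2 * (2 * (- c / (N + 1)) * c) = - 2 * c^2 * (N + 1)"
    using N by (simp add: power2_eq_square)
  also have "(N + 1)^2 * ((- c / (N + 1))^2 * N) = c^2 * N"
    using N by (simp add: power_divide)
  finally have "c^2 * (N + 2) \<le> 0"
    by (simp add: algebra_simps)
  then have "c^2 \<le> 0"
    using N by (simp add: mult_le_0_iff)
  then show ?thesis by (simp add: c_def)
qed

lemma minimizing_sequence_infdist:
  assumes "S \<noteq> {}"
  obtains s where "\<And>k. s k \<in> S" "(\<lambda>k. dist u (s k)) \<longlonglongrightarrow> infdist u S"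
proof -
  have "\<exists>s. s \<in> S \<and> dist u s < infdist u S + 1 / Suc k" for k
  proof -
    have "(INF s\<in>S. dist u s) < infdist u S + 1 / Suc k"
      by (simp add: infdist_notempty[OF assms, symmetric])
    then show ?thesis by (auto simp: cINF_less_iff[OF assms])
  qed
  then obtain s where s: "\<And>k. s k \<in> S" "\<And>k. dist u (s k) < infdist u S + 1 / Suc k"
    using choice[of "\<lambda>k s. s \<in> S \<and> dist u s < infdist u S + 1 / Suc k"] by blast
  have "\<forall>\<^sub>F k in sequentially. infdist u S \<le> dist u (s k)"
    using s(1) by (simp add: infdist_le)
  moreover have "\<forall>\<^sub>F k in sequentially. dist u (s k) \<le> infdist u S + 1 / Suc k"
    using s(2) by (simp add: less_imp_le)
  moreover have "(\<lambda>k. infdist u S + 1 / Suc k) \<longlonglongrightarrow> infdist u S"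
    using tendsto_add[OF tendsto_const LIMSEQ_Suc[OF lim_const_over_n], of "infdist u S" 1] by simp
  ultimately have "(\<lambda>k. dist u (s k)) \<longlonglongrightarrow> infdist u S"
    by (rule real_tendsto_sandwich[OF _ _ tendsto_const])
  then show ?thesis using s that by blast
qed

lemma closure_convex_nearest_point:
  fixes S :: "'a::{real_inner,complete_space} set"
  assumes "convex S" "S \<noteq> {}"
  obtains p where "p \<in> closure S" "dist u p = infdist u S"
proof -
  obtain s where s: "\<And>k. s k \<in> S" and lim: "(\<lambda>k. dist u (s k)) \<longlonglongrightarrow> infdist u S"
    using minimizing_sequence_infdist[OF assms(2)] by blast
  define r where "r k = (dist u (s k))^2 - (infdist u S)^2" for k
  have "r \<longlonglongrightarrow> (infdist u S)^2 - (infdist u S)^2"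
    unfolding r_def by (intro tendsto_intros lim)
  then have r0: "r \<longlonglongrightarrow> 0" by simp
  have "Cauchy s"
  proof (rule metric_CauchyI)
    fix e :: real assume "e > 0"
    then have "\<forall>\<^sub>F k in sequentially. r k < e^2 / 4"
      using r0 by (intro order_tendstoD(2)) auto
    then obtain N where N: "\<And>k. k \<ge> N \<Longrightarrow> r k < e^2 / 4"
      unfolding eventually_sequentially by blast
    have "dist (s m) (s n) < e" if "m \<ge> N" "n \<ge> N" for m n
    proof -
      have "(dist (s m) (s n))^2 \<le> 2 * r m + 2 * r n"
        using norm_diff_square_le_infdist[OF assms(1) s s, of m n u]
        by (simp add: r_def dist_norm)
      also have "\<dots> < e^2" using N[OF that(1)] N[OF that(2)] by linarith
      finally show ?thesis using \<open>e > 0\<close> by (simp add: power_less_imp_less_base)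
    qed
    then show "\<exists>N. \<forall>m\<ge>N. \<forall>n\<ge>N. dist (s m) (s n) < e" by blast
  qed
  then obtain p where p: "s \<longlonglongrightarrow> p"
    using Cauchy_convergent_iff convergent_def by blast
  have "p \<in> closure S"
    unfolding closure_sequential using s p by blast
  moreover have "dist u p = infdist u S"
    using LIMSEQ_unique[OF tendsto_dist[OF tendsto_const p] lim] .
  ultimately show ?thesis using that by blast
qed

lemma orthogonal_projection_closure_exists:
  fixes S :: "'a::{real_inner,complete_space} set"
  assumes "subspace S"
  obtains p where "p \<in> closure S" "\<And>q. q \<in> closure S \<Longrightarrow> inner (u - p) q = 0"
proof -
  obtain p where p: "p \<in> closure S" and dp: "dist u p = infdist u S"
    using closure_convex_nearest_point[of S u] assms subspace_imp_convex subspace_0 by blast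
  have "inner (u - p) q = 0" if q: "q \<in> closure S" for q
  proof (rule inner_eq_zero_if_norm_le_add)
    fix t
    have "p - t *\<^sub>R q \<in> closure S"
      using subspace_closure[OF assms] p q by (simp add: subspace_diff subspace_scale)
    then have "dist u p \<le> dist u (p - t *\<^sub>R q)"
      unfolding dp by (rule infdist_le_closure)
    then show "norm (u - p) \<le> norm (u - p + t *\<^sub>R q)"
      by (simp add: dist_norm algebra_simps)
  qed
  then show ?thesis using that p by blast
qed

section \<open>Complex rank-one perturbations\<close>

text \<open>The orthogonal complement of the complex line through \<open>x\<close>: the real inner product is
the real part of the complex one, and \<open>Im \<langle>z, x\<rangle> = Re \<langle>z, \<i> x\<rangle>\<close>.\<close>

definition orth_cline :: "'a::complex_hilbert \<Rightarrow> 'a set" where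
  "orth_cline x = {z. inner z x = 0 \<and> inner z (cscale \<i> x) = 0}"

lemma subspace_orth_cline: "subspace (orth_cline x)"
  unfolding subspace_def orth_cline_def by (simp add: inner_add_left)

lemma cscale_ii_in_orth_cline: "z \<in> orth_cline x \<Longrightarrow> cscale \<i> z \<in> orth_cline x"
  unfolding orth_cline_def by (simp add: inner_cscale_ii_left cscale_ii_ii)

lemma orth_cline_scaleR: "z \<in> orth_cline x \<Longrightarrow> z \<in> orth_cline (c *\<^sub>R x)"
  unfolding orth_cline_def by (simp add: cscale_scaleR)

lemma norm_square_orth_cline_decomposition:
  fixes x z :: "'a::complex_hilbert"
  assumes "z \<in> orth_cline x"
  shows "(norm (z + a *\<^sub>R x + b *\<^sub>R cscale \<i> x))^2 = (norm z)^2 + (a^2 + b^2) * (norm x)^2"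
proof -
  have "(norm (z + a *\<^sub>R x + b *\<^sub>R cscale \<i> x))^2 = (norm (z + a *\<^sub>R x))^2 + (norm (b *\<^sub>R cscale \<i> x))^2"
    using assms by (intro norm_add_Pythagorean) (simp add: orth_cline_def orthogonal_def inner_add_left)
  also have "(norm (z + a *\<^sub>R x))^2 = (norm z)^2 + (norm (a *\<^sub>R x))^2"
    using assms by (intro norm_add_Pythagorean) (simp add: orth_cline_def orthogonal_def)
  finally show ?thesis
    by (simp add: power_mult_distrib distrib_right)
qed

lemma orth_cline_decomposition:
  fixes x y :: "'a::complex_hilbert"
  assumes "norm x = 1"
  defines "z \<equiv> y - inner y x *\<^sub>R x - inner y (cscale \<i> x) *\<^sub>R cscale \<i> x"
  shows "z \<in> orth_cline x" "y = z + inner y x *\<^sub>R x + inner y (cscale \<i> x) *\<^sub>R cscale \<i> x"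
proof -
  have "inner x x = 1" using assms(1) by (simp flip: power2_norm_eq_inner)
  then show "z \<in> orth_cline x"
    by (simp add: z_def orth_cline_def inner_diff_left inner_commute[of "cscale \<i> x" x])
qed (simp add: z_def)

lemma lower_bound_from_orth_cline:
  fixes B :: "'a::complex_hilbert \<Rightarrow>\<^sub>L 'b::complex_hilbert"
  assumes "clinear_op B" "norm x = 1" "norm (B x) = m" "0 \<le> m"
    and "\<And>z. z \<in> orth_cline x \<Longrightarrow> m * norm z \<le> norm (B z) \<and> B z \<in> orth_cline (B x)"
  shows "m * norm y \<le> norm (B y)"
proof -
  define a where "a = inner y x"
  define b where "b = inner y (cscale \<i> x)"
  define z where "z = y - a *\<^sub>R x - b *\<^sub>R cscale \<i> x"
  have z: "z \<in> orth_cline x" and y: "y = z + a *\<^sub>R x + b *\<^sub>R cscale \<i> x"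
    using orth_cline_decomposition[OF assms(2), of y] by (simp_all add: z_def a_def b_def)
  have By: "B y = B z + a *\<^sub>R B x + b *\<^sub>R cscale \<i> (B x)"
    by (subst y) (simp add: blinfun.add_right blinfun.scaleR_right clinear_opD[OF assms(1)])
  have "(m * norm y)^2 = (m * norm z)^2 + (a^2 + b^2) * m^2"
    using norm_square_orth_cline_decomposition[OF z, of a b] assms(2) y
    by (simp add: power_mult_distrib algebra_simps)
  also have "\<dots> \<le> (norm (B z))^2 + (a^2 + b^2) * m^2"
    using assms(4) assms(5)[OF z] by (simp add: power_mono)
  also have "\<dots> = (norm (B y))^2"
    using norm_square_orth_cline_decomposition[of "B z" "B x" a b] assms(3) assms(5)[OF z] By
    by simp
  finally show ?thesis
    by (rule power2_le_imp_le) simp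
qed

text \<open>The operator \<open>y \<mapsto> \<langle>y, x\<rangle> w\<close>, with the complex inner product split into its real and
imaginary parts.\<close>

definition rank_one :: "'a::complex_hilbert \<Rightarrow> 'b::complex_hilbert \<Rightarrow> 'a \<Rightarrow>\<^sub>L 'b" where
  "rank_one x w = Blinfun (\<lambda>y. inner y x *\<^sub>R w + inner y (cscale \<i> x) *\<^sub>R cscale \<i> w)"

lemma rank_one_apply:
  "blinfun_apply (rank_one x w) y = inner y x *\<^sub>R w + inner y (cscale \<i> x) *\<^sub>R cscale \<i> w"
proof -
  have "bounded_linear (\<lambda>y. inner y x *\<^sub>R w + inner y (cscale \<i> x) *\<^sub>R cscale \<i> w)"
    by (intro bounded_linear_intros)
  then show ?thesis by (simp add: rank_one_def bounded_linear_Blinfun_apply)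
qed

lemma clinear_op_rank_one: "clinear_op (rank_one x w)"
  by (rule clinear_opI)
    (simp add: rank_one_apply inner_cscale_ii_left cscale_add_right cscale_scaleR cscale_ii_ii)

lemma norm_rank_one_le: "norm (rank_one x w) \<le> 2 * norm x * norm w"
proof (rule norm_blinfun_bound)
  fix y
  have "norm (rank_one x w y) \<le> norm (inner y x *\<^sub>R w) + norm (inner y (cscale \<i> x) *\<^sub>R cscale \<i> w)"
    unfolding rank_one_apply by (rule norm_triangle_ineq)
  also have "\<dots> = \<bar>inner y x\<bar> * norm w + \<bar>inner y (cscale \<i> x)\<bar> * norm w"
    by simp
  also have "\<dots> \<le> norm y * norm x * norm w + norm y * norm x * norm w"
    using Cauchy_Schwarz_ineq2[of y x] Cauchy_Schwarz_ineq2[of y "cscale \<i> x"]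
    by (intro add_mono mult_right_mono) auto
  finally show "norm (rank_one x w y) \<le> 2 * norm x * norm w * norm y"
    by (simp add: algebra_simps)
qed simp

lemma component_orthogonal_to_image:
  fixes A :: "'a::complex_hilbert \<Rightarrow>\<^sub>L 'b::complex_hilbert"
  assumes A: "clinear_op A" and m: "0 \<le> m" "\<And>y. m * norm y \<le> norm (A y)" and x: "norm x = 1"
  obtains e where "m \<le> norm e" "(norm (A x - e))^2 + (norm e)^2 = (norm (A x))^2"
    "\<And>z. z \<in> orth_cline x \<Longrightarrow> A z \<in> orth_cline e"
proof -
  define S where "S = blinfun_apply A ` orth_cline x"
  have "subspace S"
    unfolding S_def
    by (intro linear_subspace_image subspace_orth_cline bounded_linear.linear blinfun.bounded_linear_right)
  then obtain p where p: "p \<in> closure S" and perp: "\<And>q. q \<in> closure S \<Longrightarrow> inner (A x - p) q = 0"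
    using orthogonal_projection_closure_exists by blast
  have "S \<subseteq> {q. m \<le> norm (A x - q)}"
  proof
    fix q assume "q \<in> S"
    then obtain z where z: "z \<in> orth_cline x" "q = A z" by (auto simp: S_def)
    have "orthogonal x (- z)"
      using z by (simp add: orth_cline_def orthogonal_def inner_commute)
    then have "(norm (x - z))^2 = 1 + (norm z)^2"
      using norm_add_Pythagorean[of x "- z"] x by simp
    then have "1 \<le> norm (x - z)"
      using power2_le_imp_le[of 1 "norm (x - z)"] by simp
    then have "m \<le> m * norm (x - z)"
      using mult_left_mono[of 1 "norm (x - z)" m] m(1) by simp
    also have "\<dots> \<le> norm (A x - q)"
      using m(2)[of "x - z"] by (simp add: z(2) blinfun.diff_right)
    finally show "q \<in> {q. m \<le> norm (A x - q)}" by simp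
  qed
  then have "closure S \<subseteq> {q. m \<le> norm (A x - q)}"
    by (intro closure_minimal closed_Collect_le continuous_intros)
  then have "m \<le> norm (A x - p)" using p by blast
  moreover have "(norm p)^2 + (norm (A x - p))^2 = (norm (A x))^2"
    using norm_add_Pythagorean[of p "A x - p"] perp[OF p] by (simp add: orthogonal_def inner_commute)
  moreover have "A z \<in> orth_cline (A x - p)" if "z \<in> orth_cline x" for z
  proof -
    have "A z \<in> closure S" "A (cscale \<i> z) \<in> closure S"
      unfolding S_def using that cscale_ii_in_orth_cline[OF that]
      by (blast intro: closure_subset[THEN subsetD])+
    moreover have "inner (A z) (cscale \<i> (A x - p)) = - inner (A (cscale \<i> z)) (A x - p)"
      by (simp add: inner_cscale_ii_left clinear_opD[OF A])
    ultimately show ?thesis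
      using perp by (simp add: orth_cline_def inner_commute)
  qed
  ultimately show ?thesis using that by auto
qed

lemma minimum_attaining_perturbation:
  fixes A :: "'a::complex_hilbert \<Rightarrow>\<^sub>L 'b::complex_hilbert"
  assumes A: "clinear_op A" and m: "0 < m" "\<And>y. m * norm y \<le> norm (A y)" and x: "norm x = 1"
  obtains B where "clinear_op B" "\<And>y. m * norm y \<le> norm (B y)" "norm (B x) = m"
    "norm (B - A) \<le> 2 * (norm (A x) - m + sqrt ((norm (A x))^2 - m^2))"
proof -
  obtain e where e: "m \<le> norm e" "(norm (A x - e))^2 + (norm e)^2 = (norm (A x))^2"
    and perp: "\<And>z. z \<in> orth_cline x \<Longrightarrow> A z \<in> orth_cline e"
    using component_orthogonal_to_image[OF A less_imp_le[OF m(1)] m(2) x] by blast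
  have e0: "0 < norm e" using e(1) m(1) by linarith
  define w where "w = (m / norm e) *\<^sub>R e - A x"
  define B where "B = A + rank_one x w"
  have B_apply: "B y = A y + inner y x *\<^sub>R w + inner y (cscale \<i> x) *\<^sub>R cscale \<i> w" for y
    by (simp add: B_def blinfun.add_left rank_one_apply)
  have "B x = (m / norm e) *\<^sub>R e"
    using x by (simp add: B_apply w_def norm_eq_1)
  then have Bx: "norm (B x) = m"
    using e0 m(1) by simp
  have clB: "clinear_op B"
    unfolding B_def by (intro clinear_op_add A clinear_op_rank_one)
  have "m * norm z \<le> norm (B z) \<and> B z \<in> orth_cline (B x)" if "z \<in> orth_cline x" for z
  proof -
    have "B z = A z" using that by (simp add: B_apply orth_cline_def inner_commute)
    then show ?thesis
      using m(2)[of z] orth_cline_scaleR[OF perp[OF that], of "m / norm e"] \<open>B x = (m / norm e) *\<^sub>R e\<close>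
      by simp
  qed
  then have lower: "m * norm y \<le> norm (B y)" for y
    using lower_bound_from_orth_cline[OF clB x Bx] m(1) by simp
  have "(norm e)^2 \<le> (norm (A x))^2"
    using e(2) zero_le_power2[of "norm (A x - e)"] by linarith
  then have "norm e \<le> norm (A x)"
    by (rule power2_le_imp_le) simp
  have "(norm (A x - e))^2 \<le> (norm (A x))^2 - m^2"
    using e(2) power_mono[OF e(1) less_imp_le[OF m(1)], of 2] by linarith
  then have "norm (A x - e) \<le> sqrt ((norm (A x))^2 - m^2)"
    by (rule real_le_rsqrt)
  have "w = (m / norm e - 1) *\<^sub>R e - (A x - e)"
    by (simp add: w_def algebra_simps)
  then have "norm w \<le> norm ((m / norm e - 1) *\<^sub>R e) + norm (A x - e)"
    by (simp only: norm_triangle_ineq4)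
  also have "norm ((m / norm e - 1) *\<^sub>R e) = norm e - m"
  proof -
    have "m / norm e \<le> 1" using e(1) e0 by simp
    then show ?thesis using e0 by (simp add: abs_of_nonpos left_diff_distrib)
  qed
  finally have w: "norm w \<le> norm (A x) - m + sqrt ((norm (A x))^2 - m^2)"
    using \<open>norm e \<le> norm (A x)\<close> \<open>norm (A x - e) \<le> sqrt _\<close> by linarith
  have "norm (B - A) \<le> 2 * norm w"
    using norm_rank_one_le[of x w] x by (simp add: B_def)
  also have "\<dots> \<le> 2 * (norm (A x) - m + sqrt ((norm (A x))^2 - m^2))"
    using w by simp
  finally show ?thesis
    using that[OF clB lower Bx] by blast
qed

section \<open>The minimum modulus\<close>

lemma nonzero_if_infinite_dimensional:
  assumes "infinite_dimensional TYPE('a)"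
  obtains x :: "'a::complex_hilbert" where "x \<noteq> 0"
proof -
  have "cspan ({}::'a set) \<noteq> UNIV"
    using assms unfolding infinite_dimensional_def by blast
  moreover have "cspan ({}::'a set) = {0}"
    unfolding cspan_def by auto
  ultimately show ?thesis using that by auto
qed

lemma unit_sphere_image_nonempty:
  fixes A :: "'a::real_normed_vector \<Rightarrow>\<^sub>L 'b::real_normed_vector" and x :: 'a
  assumes "x \<noteq> 0"
  shows "{norm (A y) | y. norm y = 1} \<noteq> {}"
  using assms by (auto intro!: exI[of _ "x /\<^sub>R norm x"])

lemma min_modulus_le:
  fixes A :: "'a::real_normed_vector \<Rightarrow>\<^sub>L 'b::real_normed_vector"
  shows "norm x = 1 \<Longrightarrow> min_modulus A \<le> norm (A x)"
  unfolding min_modulus_def by (rule cInf_lower) (auto intro: bdd_belowI[of _ 0])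

lemma min_modulus_lower_bound:
  fixes A :: "'a::real_normed_vector \<Rightarrow>\<^sub>L 'b::real_normed_vector"
  shows "min_modulus A * norm y \<le> norm (A y)"
proof (cases "y = 0")
  case False
  then have "min_modulus A \<le> norm (A (y /\<^sub>R norm y))"
    by (intro min_modulus_le) simp
  then show ?thesis
    using False by (simp add: blinfun.scaleR_right field_simps)
qed simp

lemma min_modulus_pos:
  fixes A :: "'a::real_normed_vector \<Rightarrow>\<^sub>L 'b::real_normed_vector" and x :: 'a
  assumes "bounded_below A" "x \<noteq> 0"
  shows "0 < min_modulus A"
proof -
  obtain c where c: "c > 0" "\<And>y. c * norm y \<le> norm (A y)"
    using assms(1) unfolding bounded_below_def by blast
  have "c \<le> min_modulus A"
    unfolding min_modulus_def
  proof (rule cInf_greatest[OF unit_sphere_image_nonempty[OF assms(2)]])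
    fix t assume "t \<in> {norm (A y) | y. norm y = 1}"
    then obtain y where "norm y = 1" "t = norm (A y)" by blast
    then show "c \<le> t" using c(2)[of y] by simp
  qed
  then show ?thesis using c(1) by linarith
qed

lemma min_modulus_approx:
  fixes A :: "'a::real_normed_vector \<Rightarrow>\<^sub>L 'b::real_normed_vector" and x :: 'a
  assumes "x \<noteq> 0" "0 < \<epsilon>"
  obtains y where "norm y = 1" "norm (A y) < min_modulus A + \<epsilon>"
proof -
  have "Inf {norm (A y) | y. norm y = 1} < min_modulus A + \<epsilon>"
    using assms(2) by (simp add: min_modulus_def)
  then show ?thesis
    using cInf_lessD[OF unit_sphere_image_nonempty[OF assms(1)]] that by blast
qed

lemma minimum_attainingI:
  fixes A :: "'a::real_normed_vector \<Rightarrow>\<^sub>L 'b::real_normed_vector"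
  assumes "\<And>y. m * norm y \<le> norm (A y)" "norm x = 1" "norm (A x) = m"
  shows "minimum_attaining A"
proof -
  have "min_modulus A = m"
    unfolding min_modulus_def
  proof (rule cInf_eq_minimum)
    show "m \<in> {norm (A y) | y. norm y = 1}" using assms(2,3) by blast
  next
    fix t assume "t \<in> {norm (A y) | y. norm y = 1}"
    then obtain y where "norm y = 1" "t = norm (A y)" by blast
    then show "m \<le> t" using assms(1)[of y] by simp
  qed
  then show ?thesis
    unfolding minimum_attaining_def using assms(2,3) by blast
qed

lemma minimum_attaining_approximation:
  fixes A :: "'a::complex_hilbert \<Rightarrow>\<^sub>L 'b::complex_hilbert" and x0 :: 'a
  assumes A: "clinear_op A" "bounded_below A" and "x0 \<noteq> 0" "0 < \<epsilon>"
  obtains B where "clinear_op B" "minimum_attaining B" "bounded_below B" "norm (B - A) < \<epsilon>"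
proof -
  define m where "m = min_modulus A"
  have m: "0 < m" "\<And>y. m * norm y \<le> norm (A y)"
    unfolding m_def using min_modulus_pos[OF A(2) \<open>x0 \<noteq> 0\<close>] min_modulus_lower_bound by auto
  define g where "g t = 2 * (t - m + sqrt (t^2 - m^2))" for t
  have "isCont g m" unfolding g_def by (intro continuous_intros)
  then obtain \<delta> where "0 < \<delta>" and \<delta>: "\<And>t. dist t m < \<delta> \<Longrightarrow> dist (g t) (g m) < \<epsilon>"
    using \<open>0 < \<epsilon>\<close> unfolding continuous_at_eps_delta by blast
  obtain x where x: "norm x = 1" "norm (A x) < m + \<delta>"
    using min_modulus_approx[OF \<open>x0 \<noteq> 0\<close> \<open>0 < \<delta>\<close>] unfolding m_def by blast
  obtain B where B: "clinear_op B" "\<And>y. m * norm y \<le> norm (B y)" "norm (B x) = m"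
    and "norm (B - A) \<le> g (norm (A x))"
    using minimum_attaining_perturbation[OF A(1) m x(1)] unfolding g_def by blast
  moreover have "g (norm (A x)) < \<epsilon>"
    using \<delta>[of "norm (A x)"] m(2)[of x] x by (simp add: g_def dist_real_def)
  moreover have "minimum_attaining B" "bounded_below B"
    using minimum_attainingI[OF B(2) x(1) B(3)] B(2) m(1) by (auto simp: bounded_below_def)
  ultimately show ?thesis
    using that by fastforce
qed

theorem corollary3p9:
  assumes "infinite_dimensional TYPE('a::complex_hilbert)"
    and "infinite_dimensional TYPE('b::complex_hilbert)"
  shows "{A :: 'a \<Rightarrow>\<^sub>L 'b. clinear_op A \<and> bounded_below A}
           \<subseteq> closure {A. clinear_op A \<and> minimum_attaining A \<and> bounded_below A}"
proof
  fix A :: "'a \<Rightarrow>\<^sub>L 'b"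
  assume "A \<in> {A. clinear_op A \<and> bounded_below A}"
  then have A: "clinear_op A" "bounded_below A" by auto
  obtain x0 :: 'a where "x0 \<noteq> 0"
    using nonzero_if_infinite_dimensional[OF assms(1)] .
  show "A \<in> closure {A. clinear_op A \<and> minimum_attaining A \<and> bounded_below A}"
    unfolding closure_approachable dist_norm
    using minimum_attaining_approximation[OF A \<open>x0 \<noteq> 0\<close>] by blast
qed

end
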